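(* Let $n\ge2$, $0<r<n$, and $E_1\ge E_2\ge\dots\ge E_n>0$. For a set $\mathcal{A}=\{a_1<a_2<\dots<a_r\}\subseteq[1:n]$ of size $r$, let (P-$\mathcal{A}$) be the linear program $$\max_{\mathbf{p}\in\mathcal{I},\,\gamma\in\mathbb{R}}\ \sum_{j=1}^np_jE_j-\frac12\sum_{j\in\mathcal{A}}p_jE_j\quad\text{s.t. } p_aE_a\ge\gamma\ \forall a\in\mathcal{A},\quad \gamma\ge p_tE_t\ \forall t\in[1:n]\setminus\mathcal{A}.$$ Then the optimal value of (P-$\{1,2,\dots,r\}$) is at least the optimal value of (P-$\mathcal{A}$) for every such $\mathcal{A}$.
   Context: $\mathcal{I}=\{\mathbf{p}\in[0,1]^n:\sum_kp_k=r\}$; $[1:n]=\{1,\dots,n\}$. (For $m=2$, maximizing $f^{\mathrm{worst}}(\mathbf{p})=\sum_kp_kE_k-\frac12(\text{sum of the }r\text{ largest }p_kE_k)$ over $\mathcal{I}$ is the best of the programs (P-$\mathcal{A}$).) *)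

theory Defs
  imports "HOL-Analysis.Analysis"
begin

text \<open>Vectors p in [0,1]^n are functions nat => real, indexed on {1..n}.\<close>

definition simplexI :: "nat \<Rightarrow> nat \<Rightarrow> (nat \<Rightarrow> real) set" where
  "simplexI n r = {p. (\<forall>k\<in>{1..n}. 0 \<le> p k \<and> p k \<le> 1) \<and> (\<Sum>k=1..n. p k) = real r}"

definition feasibleA :: "nat \<Rightarrow> nat \<Rightarrow> (nat \<Rightarrow> real) \<Rightarrow> nat set \<Rightarrow> ((nat \<Rightarrow> real) \<times> real) set" where
  "feasibleA n r E A = {(p, \<gamma>). p \<in> simplexI n r \<and>
      (\<forall>a\<in>A. p a * E a \<ge> \<gamma>) \<and> (\<forall>t\<in>{1..n} - A. \<gamma> \<ge> p t * E t)}"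

definition objA :: "nat \<Rightarrow> (nat \<Rightarrow> real) \<Rightarrow> nat set \<Rightarrow> (nat \<Rightarrow> real) \<Rightarrow> real" where
  "objA n E A p = (\<Sum>j=1..n. p j * E j) - (1/2) * (\<Sum>j\<in>A. p j * E j)"

definition optA :: "nat \<Rightarrow> nat \<Rightarrow> (nat \<Rightarrow> real) \<Rightarrow> nat set \<Rightarrow> real" where
  "optA n r E A = (SUP x\<in>feasibleA n r E A. objA n E A (fst x))"

end

theory Submission imports Defs begin

text \<open>A feasible point of (P-\<open>A\<close>) can be improved pair by pair. If \<open>i \<le> r\<close> lies outside \<open>A\<close>
  and \<open>a > r\<close> lies in \<open>A\<close>, then \<open>E\<^sub>i \<ge> E\<^sub>a\<close>, and the mass \<open>p\<^sub>i + p\<^sub>a\<close> can be redistributed so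
  that \<open>i\<close> meets the threshold \<open>\<gamma>\<close> from above and \<open>a\<close> from below, without decreasing the
  objective of the program in which \<open>a\<close> has been exchanged for \<open>i\<close>. Each exchange reduces
  \<open>|A - {1..r}|\<close>, so finitely many of them turn any feasible point of (P-\<open>A\<close>) into a
  feasible point of (P-\<open>{1..r}\<close>) with at least the same objective value.\<close>

text \<open>In the two exchange lemmas \<open>x, y\<close> are the masses at \<open>i\<close> and \<open>a\<close>, with energies
  \<open>E1 \<ge> E2\<close>. The last conjunct compares the contributions of the pair to the objective
  after the exchange (now \<open>i\<close> is halved) and before it (then \<open>a\<close> was halved).\<close>

lemma exchange_pair_large_gap:
  fixes E1 E2 x y g :: real
  assumes "E2 > 0" "E1 \<ge> 2 * E2" "0 \<le> x" "x \<le> 1" "0 \<le> y" "y \<le> 1"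
    and "x * E1 \<le> g" "g \<le> y * E2"
  shows "\<exists>x' y'. x' + y' = x + y \<and> 0 \<le> x' \<and> x' \<le> 1 \<and> 0 \<le> y' \<and> y' \<le> 1
           \<and> g \<le> x' * E1 \<and> y' * E2 \<le> g \<and> y * E2 / 2 + x * E1 \<le> x' * E1 / 2 + y' * E2"
proof -
  define x' where "x' = min 1 (x + y)"
  have x': "y \<le> x'" "x' \<le> 1" "x + y - x' \<le> x" "0 \<le> x + y - x'"
    using assms unfolding x'_def by auto
  have "x * (2 * E2) \<le> y * E2"
    using assms mult_left_mono[of "2 * E2" E1 x] by linarith
  then have x_le: "2 * x \<le> y"
    using assms by (simp add: mult.assoc mult.left_commute[of 2])
  have "g \<le> x' * E1"
    using assms x' mult_left_mono[of E2 E1 y] mult_right_mono[of y x' E1] by linarith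
  moreover have "(x + y - x') * E2 \<le> g"
    using assms x' mult_right_mono[of "x + y - x'" x E2] mult_left_mono[of E2 E1 x] by linarith
  moreover have "y * E2 / 2 + x * E1 \<le> x' * E1 / 2 + (x + y - x') * E2"
  proof -
    have "0 \<le> (x' - y) * (E1 / 2 - E2) + (E1 - E2) * (y / 2 - x)"
      using x' x_le assms by simp
    also have "\<dots> = x' * E1 / 2 + (x + y - x') * E2 - (y * E2 / 2 + x * E1)"
      by (simp add: field_simps)
    finally show ?thesis by simp
  qed
  ultimately show ?thesis
    using x' assms by (intro exI[of _ x'] exI[of _ "x + y - x'"]) (simp add: x'_def)
qed

lemma exchange_pair_small_gap:
  fixes E1 E2 x y g :: real
  assumes "E2 > 0" "E2 \<le> E1" "E1 \<le> 2 * E2" "0 \<le> x" "x \<le> 1" "0 \<le> y" "y \<le> 1"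
    and "x * E1 \<le> g" "g \<le> y * E2"
  shows "\<exists>x' y'. x' + y' = x + y \<and> 0 \<le> x' \<and> x' \<le> 1 \<and> 0 \<le> y' \<and> y' \<le> 1
           \<and> g \<le> x' * E1 \<and> y' * E2 \<le> g \<and> y * E2 / 2 + x * E1 \<le> x' * E1 / 2 + y' * E2"
proof -
  define u w s where "u = g / E1" and "w = g / E2" and "s = x + y"
  \<comment> \<open>the least \<open>x'\<close> with \<open>x' E1 \<ge> g\<close>, \<open>(s - x') E2 \<le> g\<close> and \<open>s - x' \<le> 1\<close>\<close>
  define x' where "x' = max u (max (s - w) (s - 1))"
  have E1: "E1 > 0" using assms by linarith
  have g: "0 \<le> g" using assms E1 mult_nonneg_nonneg[of x E1] by linarith
  have gu: "g = u * E1" and gw: "g = w * E2" using E1 assms unfolding u_def w_def by simp_all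
  have "u \<le> w" unfolding u_def w_def using g assms by (intro divide_left_mono) auto
  moreover have "0 \<le> u" "x \<le> u" "w \<le> y"
    using assms E1 g unfolding u_def w_def by (simp_all add: divide_le_eq le_divide_eq)
  ultimately have x': "0 \<le> x'" "x' \<le> 1" "x' \<le> s" "u \<le> x'" "s - w \<le> x'" "s - 1 \<le> x'"
    using assms unfolding x'_def s_def by auto
  have "g \<le> x' * E1" using x' E1 gu by (simp add: mult_right_mono)
  moreover have "(s - x') * E2 \<le> g" using x' assms gw by (simp add: mult_right_mono)
  moreover have "y * E2 / 2 + x * E1 \<le> x' * E1 / 2 + (s - x') * E2"
  proof -
    consider "x' = u" | "x' = s - w" | "x' = s - 1" unfolding x'_def by linarith
    then show ?thesis
    proof cases
      case 1
      have "0 \<le> (u - x) * (E1 - E2)" using \<open>x \<le> u\<close> assms by simp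
      then have "0 \<le> (u - x) * (E1 - E2) + (y * E2 - g) / 2" using assms by simp
      also have "\<dots> = x' * E1 / 2 + (s - x') * E2 - (y * E2 / 2 + x * E1)"
        using 1 gu unfolding s_def by (simp add: field_simps)
      finally show ?thesis by simp
    next
      case 2
      have "0 \<le> (y - w) * (E1 - E2)" using \<open>w \<le> y\<close> assms by simp
      then have "0 \<le> ((y - w) * (E1 - E2) + g - x * E1) / 2" using assms by simp
      also have "\<dots> = x' * E1 / 2 + (s - x') * E2 - (y * E2 / 2 + x * E1)"
        unfolding 2 s_def using gw by (simp add: field_simps)
      finally show ?thesis by simp
    next
      case 3
      have "0 \<le> (2 * E2 - E1) * (1 - y) + (y * E2 - x * E1)"
        using assms by (intro add_nonneg_nonneg) auto
      also have "\<dots> = 2 * (x' * E1 / 2 + (s - x') * E2 - (y * E2 / 2 + x * E1))"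
        unfolding 3 s_def by (simp add: field_simps)
      finally show ?thesis by simp
    qed
  qed
  ultimately show ?thesis
    using x' by (intro exI[of _ x'] exI[of _ "s - x'"]) (simp add: s_def)
qed

lemma exchange_pair:
  fixes E1 E2 x y g :: real
  assumes "E2 > 0" "E2 \<le> E1" "0 \<le> x" "x \<le> 1" "0 \<le> y" "y \<le> 1"
    and "x * E1 \<le> g" "g \<le> y * E2"
  shows "\<exists>x' y'. x' + y' = x + y \<and> 0 \<le> x' \<and> x' \<le> 1 \<and> 0 \<le> y' \<and> y' \<le> 1
           \<and> g \<le> x' * E1 \<and> y' * E2 \<le> g \<and> y * E2 / 2 + x * E1 \<le> x' * E1 / 2 + y' * E2"
proof (cases "2 * E2 \<le> E1")
  case True
  then show ?thesis using exchange_pair_large_gap assms by blast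
next
  case False
  then show ?thesis using exchange_pair_small_gap[OF assms(1,2)] assms by simp
qed

lemma sum_eq_except_two:
  fixes f g :: "'a \<Rightarrow> 'b::ab_group_add"
  assumes "finite S" "i \<in> S" "a \<in> S" "i \<noteq> a"
    and "\<And>j. j \<in> S \<Longrightarrow> j \<noteq> i \<Longrightarrow> j \<noteq> a \<Longrightarrow> g j = f j"
  shows "sum g S = sum f S - f i - f a + g i + g a"
proof -
  have split: "sum h S = h i + h a + sum h (S - {i} - {a})" for h :: "'a \<Rightarrow> 'b"
    using assms(1-4) by (simp add: sum.remove add.assoc)
  have "sum g (S - {i} - {a}) = sum f (S - {i} - {a})"
    using assms(5) by (intro sum.cong) auto
  then show ?thesis using split[of f] split[of g] by (simp add: algebra_simps)
qed

lemma feasibleA_exchange: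
  assumes feas: "(p, g) \<in> feasibleA n r E A"
    and A: "A \<subseteq> {1..n}" and a: "a \<in> A" and i: "i \<in> {1..n} - A"
    and E: "0 < E a" "E a \<le> E i"
  shows "\<exists>q. (q, g) \<in> feasibleA n r E (insert i (A - {a}))
             \<and> objA n E A p \<le> objA n E (insert i (A - {a})) q"
proof -
  have p_bounds: "\<And>k. k \<in> {1..n} \<Longrightarrow> 0 \<le> p k \<and> p k \<le> 1"
    and p_sum: "(\<Sum>k=1..n. p k) = real r"
    and p_A: "\<And>b. b \<in> A \<Longrightarrow> g \<le> p b * E b"
    and p_out: "\<And>t. t \<in> {1..n} - A \<Longrightarrow> p t * E t \<le> g"
    using feas unfolding feasibleA_def simplexI_def by auto
  have a_n: "a \<in> {1..n}" and ia: "i \<noteq> a" and fin: "finite A"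
    using A a i finite_subset by auto
  obtain x' y' where pair: "x' + y' = p i + p a" "0 \<le> x'" "x' \<le> 1" "0 \<le> y'" "y' \<le> 1"
      "g \<le> x' * E i" "y' * E a \<le> g" "p a * E a / 2 + p i * E i \<le> x' * E i / 2 + y' * E a"
    using exchange_pair[OF E, of "p i" "p a" g] p_bounds[of i] p_bounds[of a] a_n i
      p_A[OF a] p_out[OF i] by blast
  define q where "q = p(i := x', a := y')"
  define A' where "A' = insert i (A - {a})"
  have q_other: "q j = p j" if "j \<noteq> i" "j \<noteq> a" for j
    using that unfolding q_def by simp
  have q_i: "q i = x'" and q_a: "q a = y'" using ia unfolding q_def by simp_all
  have sum_n: "(\<Sum>k=1..n. h k) = (\<Sum>k=1..n. f k) - f i - f a + h i + h a"
    if "\<And>j. j \<noteq> i \<Longrightarrow> j \<noteq> a \<Longrightarrow> h j = f j" for f h :: "nat \<Rightarrow> real"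
    using that a_n i ia by (intro sum_eq_except_two) auto
  have sum_A': "(\<Sum>k\<in>A'. q k * E k) = (\<Sum>k\<in>A. p k * E k) - p a * E a + x' * E i"
  proof -
    have "(\<Sum>k\<in>A'. q k * E k) = x' * E i + (\<Sum>k\<in>A - {a}. q k * E k)"
      using fin i q_i unfolding A'_def by simp
    also have "(\<Sum>k\<in>A - {a}. q k * E k) = (\<Sum>k\<in>A - {a}. p k * E k)"
      using i q_other by (intro sum.cong refl) (metis DiffE insertI1 mult.commute)
    finally show ?thesis using fin a by (simp add: sum_diff1)
  qed
  have "(q, g) \<in> feasibleA n r E A'"
  proof -
    have "(\<Sum>k=1..n. q k) = real r"
      using sum_n[of q p] q_other q_i q_a pair(1) p_sum by simp
    moreover have "0 \<le> q k \<and> q k \<le> 1" if "k \<in> {1..n}" for k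
      using that pair p_bounds q_other q_i q_a by (cases "k = i \<or> k = a") auto
    moreover have "g \<le> q b * E b" if "b \<in> A'" for b
      using that p_A pair(6) q_other q_i ia unfolding A'_def by (cases "b = i") auto
    moreover have "q t * E t \<le> g" if "t \<in> {1..n} - A'" for t
      using that p_out pair(7) q_other q_a a unfolding A'_def by (cases "t = a") auto
    ultimately show ?thesis unfolding feasibleA_def simplexI_def by auto
  qed
  moreover have "objA n E A' q - objA n E A p
                  = x' * E i / 2 + y' * E a - (p a * E a / 2 + p i * E i)"
  proof -
    have "(\<Sum>k=1..n. q k * E k)
          = (\<Sum>k=1..n. p k * E k) - p i * E i - p a * E a + x' * E i + y' * E a"
      using sum_n[of "\<lambda>k. p k * E k" "\<lambda>k. q k * E k"] q_other q_i q_a by simp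
    then show ?thesis unfolding objA_def sum_A' by (simp add: field_simps)
  qed
  then have "objA n E A p \<le> objA n E A' q" using pair(8) by linarith
  ultimately show ?thesis unfolding A'_def by blast
qed

lemma feasibleA_dominated_by_initial_segment:
  assumes anti: "\<And>i j. 1 \<le> i \<Longrightarrow> i \<le> j \<Longrightarrow> j \<le> n \<Longrightarrow> E j \<le> E i"
    and pos: "\<And>k. k \<in> {1..n} \<Longrightarrow> 0 < E k"
    and A: "A \<subseteq> {1..n}" "card A = r"
    and feas: "(p, g) \<in> feasibleA n r E A"
  shows "\<exists>q. (q, g) \<in> feasibleA n r E {1..r} \<and> objA n E A p \<le> objA n E {1..r} q"
  using A feas
proof (induction "card (A - {1..r})" arbitrary: A p rule: less_induct)
  case less
  have fin: "finite A" using less.prems(1) finite_subset by blast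
  show ?case
  proof (cases "A = {1..r}")
    case True
    then show ?thesis using less.prems(3) by blast
  next
    case False
    have "\<not> {1..r} \<subseteq> A" and "\<not> A \<subseteq> {1..r}"
      using False fin less.prems(2) card_subset_eq[of A "{1..r}"] card_subset_eq[of "{1..r}" A]
      by auto
    then obtain i a where i: "i \<in> {1..r} - A" and a: "a \<in> A - {1..r}" by blast
    have "r \<le> n" using less.prems(1,2) card_mono[of "{1..n}" A] by simp
    then have i_n: "i \<in> {1..n} - A" and "a \<in> {1..n}" "i \<le> a"
      using i a less.prems(1) by auto
    then have E: "0 < E a" "E a \<le> E i" using pos anti i by auto
    define A' where "A' = insert i (A - {a})"
    obtain q where q: "(q, g) \<in> feasibleA n r E A'" "objA n E A p \<le> objA n E A' q"
      using feasibleA_exchange[OF less.prems(3,1) _ i_n E] a unfolding A'_def by blast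
    have "A' - {1..r} = A - {1..r} - {a}" using i a unfolding A'_def by auto
    then have "card (A' - {1..r}) < card (A - {1..r})"
      using a fin card_Diff1_less[of "A - {1..r}" a] by simp
    moreover have "A' \<subseteq> {1..n}" "card A' = r"
      using less.prems(1,2) i_n a fin card_gt_0_iff[of A] unfolding A'_def by auto
    ultimately obtain q' where
      "(q', g) \<in> feasibleA n r E {1..r}" "objA n E A' q \<le> objA n E {1..r} q'"
      using less.hyps q(1) by blast
    then show ?thesis using q(2) by fastforce
  qed
qed

lemma indicator_in_feasibleA:
  assumes "A \<subseteq> {1..n}" "card A = r" "\<And>a. a \<in> A \<Longrightarrow> 0 \<le> E a"
  shows "(indicator A, 0) \<in> feasibleA n r E A"
proof -
  have "(\<Sum>k=1..n. indicator A k :: real) = real (card ({1..n} \<inter> A))"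
    by (simp add: indicator_def sum.If_cases)
  also have "{1..n} \<inter> A = A" using assms(1) by auto
  finally have "(\<Sum>k=1..n. indicator A k :: real) = real r" using assms(2) by simp
  then show ?thesis using assms unfolding feasibleA_def simplexI_def by (auto simp: indicator_def)
qed

lemma objA_bdd_above:
  assumes "B \<subseteq> {1..n}" "\<And>k. k \<in> {1..n} \<Longrightarrow> 0 \<le> E k"
  shows "bdd_above ((\<lambda>x. objA n E B (fst x)) ` feasibleA n r E B)"
proof (rule bdd_aboveI2)
  fix x assume "x \<in> feasibleA n r E B"
  then have q: "\<And>k. k \<in> {1..n} \<Longrightarrow> 0 \<le> fst x k \<and> fst x k \<le> 1"
    unfolding feasibleA_def simplexI_def by auto
  have "(\<Sum>j=1..n. fst x j * E j) \<le> (\<Sum>j=1..n. E j)"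
    using q assms(2) by (intro sum_mono) (simp add: mult_left_le_one_le)
  moreover have "0 \<le> (\<Sum>j\<in>B. fst x j * E j)"
    using q assms by (intro sum_nonneg) auto
  ultimately show "objA n E B (fst x) \<le> (\<Sum>j=1..n. E j)"
    unfolding objA_def by simp
qed

lemma optA_le_if_dominated:
  assumes "feasibleA n r E A \<noteq> {}"
    and "bdd_above ((\<lambda>x. objA n E B (fst x)) ` feasibleA n r E B)"
    and "\<And>p g. (p, g) \<in> feasibleA n r E A
           \<Longrightarrow> \<exists>q. (q, g) \<in> feasibleA n r E B \<and> objA n E A p \<le> objA n E B q"
  shows "optA n r E A \<le> optA n r E B"
  unfolding optA_def
proof (rule cSUP_mono[OF assms(1,2)])
  fix x assume "x \<in> feasibleA n r E A"
  then obtain q where "(q, snd x) \<in> feasibleA n r E B" "objA n E A (fst x) \<le> objA n E B q"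
    using assms(3)[of "fst x" "snd x"] by auto
  then show "\<exists>y\<in>feasibleA n r E B. objA n E A (fst x) \<le> objA n E B (fst y)" by force
qed

theorem lemma9:
  fixes n r :: nat and E :: "nat \<Rightarrow> real" and A :: "nat set"
  assumes "n \<ge> 2" and "0 < r" and "r < n"
    and "\<And>i j. 1 \<le> i \<Longrightarrow> i \<le> j \<Longrightarrow> j \<le> n \<Longrightarrow> E i \<ge> E j"
    and "E n > 0"
    and "A \<subseteq> {1..n}" and "card A = r"
  shows "optA n r E {1..r} \<ge> optA n r E A"
proof (rule optA_le_if_dominated)
  have pos: "\<And>k. k \<in> {1..n} \<Longrightarrow> 0 < E k"
    using assms(4,5) by (meson atLeastAtMost_iff less_le_trans order.refl)
  have "(indicator A, 0) \<in> feasibleA n r E A"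
    using pos assms(6) by (intro indicator_in_feasibleA[OF assms(6,7)]) (auto simp: less_imp_le)
  then show "feasibleA n r E A \<noteq> {}" by blast
  show "bdd_above ((\<lambda>x. objA n E {1..r} (fst x)) ` feasibleA n r E {1..r})"
    using objA_bdd_above pos assms(3) by (simp add: less_imp_le)
  show "\<exists>q. (q, g) \<in> feasibleA n r E {1..r} \<and> objA n E A p \<le> objA n E {1..r} q"
    if "(p, g) \<in> feasibleA n r E A" for p g
    using feasibleA_dominated_by_initial_segment[OF assms(4) pos assms(6,7) that] by blast
qed

end
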